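(* Let $\alpha=0$, so $f=z^2$, and let $X, Y, M_\lambda$ be as defined below. Then: (1) $\underline{\operatorname{Ext}}^1_A(X,Y)\cong\underline{\operatorname{Ext}}^1_A(Y,X)\cong\Bbbk$ as graded vector spaces, concentrated in degree $0$; (2) $\underline{\operatorname{Ext}}^1_A(X,X)\cong\underline{\operatorname{Ext}}^1_A(Y,Y)\cong\Bbbk$, concentrated in degree $0$; (3) for $\lambda,\mu\in\Bbbk\setminus\mathbb{Z}$ with $\lambda\neq\mu$, $\operatorname{Ext}^1_{\operatorname{gr}A}(M_\lambda,M_\mu)=0$, while $\operatorname{Ext}^1_{\operatorname{gr}A}(M_\lambda,M_\lambda)\cong\Bbbk$; (4) for $\lambda\in\Bbbk\setminus\mathbb{Z}$ and $S\in\{X,Y\}$, $\underline{\operatorname{Ext}}^1_A(M_\lambda,S)=\underline{\operatorname{Ext}}^1_A(S,M_\lambda)=0$.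
   Context: $\Bbbk$ is an algebraically closed field of characteristic $0$. $A=A(z^2)$ is the $\Bbbk$-algebra generated by $\Bbbk[z]$, $x$, $y$ with relations $xz=(z+1)x$, $yz=(z-1)y$, $xy=z^2$, $yx=(z-1)^2$, graded by $\deg x=1,\deg y=-1,\deg z=0$. $\operatorname{gr}A$ is the category of finitely generated graded right $A$-modules with degree-$0$ maps; $M\langle i\rangle_j=M_{j-i}$. $X=A/(xA+zA)$, $Y=(A/(yA+(z-1)A))\langle1\rangle$, $M_\lambda=A/(z+\lambda)A$. For graded modules $M,N$, $\underline{\operatorname{Hom}}_A(M,N)=\bigoplus_d\underline{\operatorname{Hom}}_A(M,N)_d$ where $\underline{\operatorname{Hom}}_A(M,N)_d$ is the space of graded homomorphisms of degree $d$, and $\underline{\operatorname{Ext}}^i_A$ are its derived functors (so $\underline{\operatorname{Ext}}^1_A(M,N)_d=\operatorname{Ext}^1_{\operatorname{gr}A}(M,N\langle d\rangle)$); "$\Bbbk$ concentrated in degree $0$" means one-dimensional in degree $0$ and zero elsewhere. *)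

theory Defs
  imports Main "HOL-Library.Product_Plus" "HOL-Computational_Algebra.Polynomial"
begin

(* A graded right A-module, A = A(z^2) = k<x,y,z>/(xz=(z+1)x, yz=(z-1)y, xy=z^2, yx=(z-1)^2),
   deg x = 1, deg y = -1, deg z = 0, is given by its homogeneous components (gcomp j)
   (k-subspaces of a carrier type 'v) together with the right actions of the generators on
   homogeneous elements:  gx j : M_j -> M_(j+1)  (m |-> m.x),  gy j : M_j -> M_(j-1),
   gz j : M_j -> M_j, subject to the defining relations read as right actions. *)
record 'v gmod =
  gcomp :: "int \<Rightarrow> 'v set"
  gx :: "int \<Rightarrow> 'v \<Rightarrow> 'v"
  gy :: "int \<Rightarrow> 'v \<Rightarrow> 'v"
  gz :: "int \<Rightarrow> 'v \<Rightarrow> 'v"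

definition is_gmod :: "('k::field \<Rightarrow> 'v::ab_group_add \<Rightarrow> 'v) \<Rightarrow> 'v gmod \<Rightarrow> bool" where
  "is_gmod s M \<longleftrightarrow> vector_space s \<and> (\<forall>j. module.subspace s (gcomp M j)) \<and>
    (\<forall>j. \<forall>v\<in>gcomp M j. gx M j v \<in> gcomp M (j+1) \<and> gy M j v \<in> gcomp M (j-1) \<and> gz M j v \<in> gcomp M j) \<and>
    (\<forall>j. \<forall>u\<in>gcomp M j. \<forall>v\<in>gcomp M j. \<forall>c.
        gx M j (s c u + v) = s c (gx M j u) + gx M j v \<and>
        gy M j (s c u + v) = s c (gy M j u) + gy M j v \<and>
        gz M j (s c u + v) = s c (gz M j u) + gz M j v) \<and>
    (\<forall>j. \<forall>v\<in>gcomp M j.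
        gz M (j+1) (gx M j v) = gx M j (gz M j v + v) \<and>            \<comment> \<open>xz = (z+1)x\<close>
        gz M (j-1) (gy M j v) = gy M j (gz M j v - v) \<and>            \<comment> \<open>yz = (z-1)y\<close>
        gy M (j+1) (gx M j v) = gz M j (gz M j v) \<and>                \<comment> \<open>xy = z^2\<close>
        gx M (j-1) (gy M j v) = gz M j (gz M j v - v) - (gz M j v - v))  \<comment> \<open>yx = (z-1)^2\<close>"

definition gmod_hom :: "('k::field \<Rightarrow> 'a::ab_group_add \<Rightarrow> 'a) \<Rightarrow> ('k \<Rightarrow> 'b::ab_group_add \<Rightarrow> 'b) \<Rightarrow> 'a gmod \<Rightarrow> 'b gmod
    \<Rightarrow> (int \<Rightarrow> 'a \<Rightarrow> 'b) \<Rightarrow> bool" where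
  "gmod_hom s t M1 M2 f \<longleftrightarrow> (\<forall>j. \<forall>v\<in>gcomp M1 j. f j v \<in> gcomp M2 j \<and>
      f (j+1) (gx M1 j v) = gx M2 j (f j v) \<and>
      f (j-1) (gy M1 j v) = gy M2 j (f j v) \<and>
      f j (gz M1 j v) = gz M2 j (f j v) \<and>
      (\<forall>u\<in>gcomp M1 j. \<forall>c. f j (s c u + v) = t c (f j u) + f j v))"

definition shift :: "'v gmod \<Rightarrow> int \<Rightarrow> 'v gmod" where
  "shift M d = \<lparr>gcomp = (\<lambda>j. gcomp M (j-d)), gx = (\<lambda>j. gx M (j-d)),
                 gy = (\<lambda>j. gy M (j-d)), gz = (\<lambda>j. gz M (j-d))\<rparr>"

(* Extensions 0 -> N -> E -> M -> 0 in gr A, with E = N (+) M as graded vector space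
   (every extension is isomorphic, compatibly with N -> E -> M, to one of these).
   The extra data: the components c = (xi, eta, zeta) of the actions of x, y, z from M to N. *)
type_synonym 'k cocyc = "(int \<Rightarrow> 'k \<Rightarrow> 'k) \<times> (int \<Rightarrow> 'k \<Rightarrow> 'k) \<times> (int \<Rightarrow> 'k \<Rightarrow> 'k)"

definition pscale :: "'k::field \<Rightarrow> 'k \<times> 'k \<Rightarrow> 'k \<times> 'k" where
  "pscale c p = (c * fst p, c * snd p)"

definition ext_mod :: "'k::field gmod \<Rightarrow> 'k gmod \<Rightarrow> 'k cocyc \<Rightarrow> ('k \<times> 'k) gmod" where
  "ext_mod M N c = (case c of (xi, eta, zeta) \<Rightarrow>
     \<lparr>gcomp = (\<lambda>j. gcomp N j \<times> gcomp M j),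
      gx = (\<lambda>j p. (gx N j (fst p) + xi j (snd p), gx M j (snd p))),
      gy = (\<lambda>j p. (gy N j (fst p) + eta j (snd p), gy M j (snd p))),
      gz = (\<lambda>j p. (gz N j (fst p) + zeta j (snd p), gz M j (snd p)))\<rparr>)"

definition is_ext :: "'k::field gmod \<Rightarrow> 'k gmod \<Rightarrow> 'k cocyc \<Rightarrow> bool" where
  "is_ext M N c \<longleftrightarrow> is_gmod pscale (ext_mod M N c)"

definition ext_equiv :: "'k::field gmod \<Rightarrow> 'k gmod \<Rightarrow> 'k cocyc \<Rightarrow> 'k cocyc \<Rightarrow> bool" where
  "ext_equiv M N c c' \<longleftrightarrow> (\<exists>f. gmod_hom pscale pscale (ext_mod M N c) (ext_mod M N c') f \<and>
      (\<forall>j. \<forall>n\<in>gcomp N j. f j (n, 0) = (n, 0)) \<and>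
      (\<forall>j. \<forall>p\<in>gcomp N j \<times> gcomp M j. snd (f j p) = snd p))"

definition zero_cocyc :: "'k::field cocyc" where
  "zero_cocyc = ((\<lambda>_ _. 0), (\<lambda>_ _. 0), (\<lambda>_ _. 0))"

(* scalar action a.[E] on Ext^1 (pushout along a.id_N) *)
definition cscale :: "'k::field \<Rightarrow> 'k cocyc \<Rightarrow> 'k cocyc" where
  "cscale a c = (case c of (xi, eta, zeta) \<Rightarrow>
     ((\<lambda>j m. a * xi j m), (\<lambda>j m. a * eta j m), (\<lambda>j m. a * zeta j m)))"

definition Ext1_zero :: "'k::field gmod \<Rightarrow> 'k gmod \<Rightarrow> bool" where
  "Ext1_zero M N \<longleftrightarrow> (\<forall>c. is_ext M N c \<longrightarrow> ext_equiv M N c zero_cocyc)"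

(* Ext^1_{gr A}(M,N) is isomorphic to k: there is a class [c0] such that a |-> a.[c0] is a bijection k -> Ext^1 *)
definition Ext1_one :: "'k::field gmod \<Rightarrow> 'k gmod \<Rightarrow> bool" where
  "Ext1_one M N \<longleftrightarrow> (\<exists>c0. is_ext M N c0 \<and>
      (\<forall>c. is_ext M N c \<longrightarrow> (\<exists>!a. ext_equiv M N c (cscale a c0))))"

(* graded Ext: \<underline>Ext^1_A(M,N)_d = Ext^1_{gr A}(M, N<d>) *)
definition gExt1_zero :: "'k::field gmod \<Rightarrow> 'k gmod \<Rightarrow> bool" where
  "gExt1_zero M N \<longleftrightarrow> (\<forall>d. Ext1_zero M (shift N d))"

definition gExt1_k_deg0 :: "'k::field gmod \<Rightarrow> 'k gmod \<Rightarrow> bool" where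
  "gExt1_k_deg0 M N \<longleftrightarrow> Ext1_one M (shift N 0) \<and> (\<forall>d. d \<noteq> 0 \<longrightarrow> Ext1_zero M (shift N d))"

(* The modules, on carrier k with a basis element e_j in each supported degree j.
   X = A/(xA+zA): basis y^n (deg -n, n>=0); e_j.y = e_(j-1), e_j.x = j^2 e_(j+1) (j<0), e_0.x = 0, e_j.z = j e_j. *)
definition Xmod :: "'k::field gmod" where
  "Xmod = \<lparr>gcomp = (\<lambda>j. if j \<le> 0 then UNIV else {0}),
           gx = (\<lambda>j v. if j < 0 then of_int (j^2) * v else 0),
           gy = (\<lambda>j v. if j \<le> 0 then v else 0),
           gz = (\<lambda>j v. of_int j * v)\<rparr>"

(* Y = (A/(yA+(z-1)A))<1>: basis x^n in degree n+1 (n>=0);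
   e_j.x = e_(j+1), e_j.y = (j-1)^2 e_(j-1), e_j.z = j e_j. *)
definition Ymod :: "'k::field gmod" where
  "Ymod = \<lparr>gcomp = (\<lambda>j. if 1 \<le> j then UNIV else {0}),
           gx = (\<lambda>j v. if 1 \<le> j then v else 0),
           gy = (\<lambda>j v. if 1 \<le> j then of_int ((j-1)^2) * v else 0),
           gz = (\<lambda>j v. of_int j * v)\<rparr>"

(* M_la = A/(z+la)A: basis x^n (deg n >= 0), y^n (deg -n); e_j.z = (j-la) e_j,
   e_j.x = e_(j+1) (j>=0), = (j-la)^2 e_(j+1) (j<0); e_j.y = e_(j-1) (j<=0), = (j-1-la)^2 e_(j-1) (j>0). *)
definition Mmod :: "'k::field \<Rightarrow> 'k gmod" where
  "Mmod la = \<lparr>gcomp = (\<lambda>j. UNIV),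
           gx = (\<lambda>j v. (if 0 \<le> j then 1 else (of_int j - la)^2) * v),
           gy = (\<lambda>j v. (if j \<le> 0 then 1 else (of_int j - 1 - la)^2) * v),
           gz = (\<lambda>j v. (of_int j - la) * v)\<rparr>"

end

theory Submission
  imports Defs
begin

text \<open>
  All modules in the statement have homogeneous components of dimension at most one, with
  \<open>z\<close> acting on the degree \<open>j\<close> component by the scalar \<open>j - r\<close> (\<open>r = 0\<close> for \<open>X\<close> and \<open>Y\<close>,
  \<open>r = \<lambda>\<close> for \<open>M\<^sub>\<lambda>\<close>); shifting the grading by \<open>d\<close> replaces \<open>r\<close> by \<open>r + d\<close>.
  An extension of two such modules \<open>M\<close>, \<open>N\<close> is determined by the scalars \<open>A\<^sub>j, B\<^sub>j, C\<^sub>j\<close> by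
  which \<open>x\<close>, \<open>y\<close>, \<open>z\<close> send the basis vector of \<open>M\<^sub>j\<close> into \<open>N\<close>; the relations of \<open>A\<close> become
  linear cocycle conditions on them, and two extensions are equivalent iff their cocycles differ
  by the coboundary of a family of scalars \<open>g\<^sub>j\<close>.

  If the \<open>z\<close>-shifts \<open>r\<^sub>M\<close>, \<open>r\<^sub>N\<close> differ, the \<open>z\<close>-component of the coboundary of \<open>g\<close> is
  \<open>(r\<^sub>M - r\<^sub>N) g\<close>, and \<open>g = C / (r\<^sub>M - r\<^sub>N)\<close> exhibits every cocycle as a coboundary. This
  gives all the vanishing statements, since \<open>\<lambda> \<notin> \<int>\<close>. If the shifts agree, the cocycle conditions determine
  a cocycle up to coboundaries by a single scalar (the constant value of \<open>C\<close>, or \<open>A\<^sub>0\<close>, or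
  \<open>B\<^sub>1\<close>), and an explicit cocycle with this scalar \<open>1\<close> is not a coboundary, so
  \<open>Ext\<^sup>1 \<cong> k\<close>.
\<close>

lemma is_gmod_closed:
  assumes "is_gmod s M" "v \<in> gcomp M j"
  shows "gx M j v \<in> gcomp M (j+1)" "gy M j v \<in> gcomp M (j-1)" "gz M j v \<in> gcomp M j"
  using assms unfolding is_gmod_def by blast+

lemma is_gmod_linear:
  assumes "is_gmod s M" "u \<in> gcomp M j" "v \<in> gcomp M j"
  shows "gx M j (s c u + v) = s c (gx M j u) + gx M j v"
    "gy M j (s c u + v) = s c (gy M j u) + gy M j v"
    "gz M j (s c u + v) = s c (gz M j u) + gz M j v"
  using assms unfolding is_gmod_def by blast+

lemma is_gmod_relations:
  assumes "is_gmod s M" "v \<in> gcomp M j"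
  shows "gz M (j+1) (gx M j v) = gx M j (gz M j v + v)"
    "gz M (j-1) (gy M j v) = gy M j (gz M j v - v)"
    "gy M (j+1) (gx M j v) = gz M j (gz M j v)"
    "gx M (j-1) (gy M j v) = gz M j (gz M j v - v) - (gz M j v - v)"
  using assms unfolding is_gmod_def by blast+

lemma ext_mod_simps [simp]:
  "gcomp (ext_mod M N (xi, eta, zeta)) j = gcomp N j \<times> gcomp M j"
  "gx (ext_mod M N (xi, eta, zeta)) j p = (gx N j (fst p) + xi j (snd p), gx M j (snd p))"
  "gy (ext_mod M N (xi, eta, zeta)) j p = (gy N j (fst p) + eta j (snd p), gy M j (snd p))"
  "gz (ext_mod M N (xi, eta, zeta)) j p = (gz N j (fst p) + zeta j (snd p), gz M j (snd p))"
  by (simp_all add: ext_mod_def)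

lemma pscale_Pair [simp]: "pscale c (a, b) = (c * a, c * b)"
  by (simp add: pscale_def)

lemma vector_space_pscale: "vector_space (pscale :: 'k::field \<Rightarrow> _)"
  by unfold_locales (auto simp: pscale_def algebra_simps)

lemma module_pscale: "module (pscale :: 'k::field \<Rightarrow> _)"
  by unfold_locales (auto simp: pscale_def algebra_simps)

lemma shift_zero [simp]: "shift M 0 = M"
  by (simp add: shift_def)

section \<open>Graded modules with components of dimension at most one\<close>

record 'k rank1 =
  support :: "int set"
  xcoef :: "int \<Rightarrow> 'k"
  ycoef :: "int \<Rightarrow> 'k"
  zshift :: 'k

abbreviation weight :: "('k::ring_1, 'z) rank1_scheme \<Rightarrow> int \<Rightarrow> 'k" where
  "weight P j \<equiv> of_int j - zshift P"

definition rank1_gmod :: "'k::field rank1 \<Rightarrow> 'k gmod" where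
  "rank1_gmod P = \<lparr>gcomp = (\<lambda>j. if j \<in> support P then UNIV else {0}),
      gx = (\<lambda>j v. xcoef P j * v), gy = (\<lambda>j v. ycoef P j * v), gz = (\<lambda>j v. weight P j * v)\<rparr>"

lemma rank1_gmod_simps [simp]:
  "gcomp (rank1_gmod P) j = (if j \<in> support P then UNIV else {0})"
  "gx (rank1_gmod P) j v = xcoef P j * v"
  "gy (rank1_gmod P) j v = ycoef P j * v"
  "gz (rank1_gmod P) j v = weight P j * v"
  by (simp_all add: rank1_gmod_def)

definition rank1_relations :: "'k::field rank1 \<Rightarrow> bool" where
  "rank1_relations P \<longleftrightarrow> (\<forall>j\<in>support P.
      (j+1 \<notin> support P \<longrightarrow> xcoef P j = 0) \<and> (j-1 \<notin> support P \<longrightarrow> ycoef P j = 0) \<and>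
      ycoef P (j+1) * xcoef P j = (weight P j)\<^sup>2 \<and> xcoef P (j-1) * ycoef P j = (weight P j - 1)\<^sup>2)"

definition rank1_shift :: "'k::ring_1 rank1 \<Rightarrow> int \<Rightarrow> 'k rank1" where
  "rank1_shift P d = \<lparr>support = {j. j - d \<in> support P}, xcoef = (\<lambda>j. xcoef P (j-d)),
      ycoef = (\<lambda>j. ycoef P (j-d)), zshift = zshift P + of_int d\<rparr>"

lemma shift_rank1_gmod: "shift (rank1_gmod P) d = rank1_gmod (rank1_shift P d)"
  by (simp add: shift_def rank1_gmod_def rank1_shift_def algebra_simps)

section \<open>Extensions as cocycles\<close>

definition lin_cocyc :: "(int \<Rightarrow> 'k) \<Rightarrow> (int \<Rightarrow> 'k) \<Rightarrow> (int \<Rightarrow> 'k) \<Rightarrow> 'k::field cocyc" where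
  "lin_cocyc A B C = ((\<lambda>j m. A j * m), (\<lambda>j m. B j * m), (\<lambda>j m. C j * m))"

text \<open>
  The conditions on \<open>(A, B, C)\<close> are the four defining relations of \<open>A\<close> evaluated at the
  basis vector of \<open>M\<^sub>j\<close> in the extension of \<open>rank1_gmod P\<close> by \<open>rank1_gmod Q\<close>.
\<close>

definition rank1_cocycle :: "'k::field rank1 \<Rightarrow> 'k rank1 \<Rightarrow> (int \<Rightarrow> 'k) \<Rightarrow> (int \<Rightarrow> 'k) \<Rightarrow> (int \<Rightarrow> 'k) \<Rightarrow> bool" where
  "rank1_cocycle P Q A B C \<longleftrightarrow> (\<forall>j\<in>support P.
     (j+1 \<notin> support Q \<longrightarrow> A j = 0) \<and> (j-1 \<notin> support Q \<longrightarrow> B j = 0) \<and> (j \<notin> support Q \<longrightarrow> C j = 0) \<and>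
     weight Q (j+1) * A j + xcoef P j * C (j+1) = xcoef Q j * C j + (weight P j + 1) * A j \<and>
     weight Q (j-1) * B j + ycoef P j * C (j-1) = ycoef Q j * C j + (weight P j - 1) * B j \<and>
     ycoef Q (j+1) * A j + xcoef P j * B (j+1) = weight Q j * C j + weight P j * C j \<and>
     xcoef Q (j-1) * B j + ycoef P j * A (j-1) = weight Q j * C j + (weight P j - 1) * C j - C j)"

lemma rank1_cocycleD:
  assumes "rank1_cocycle P Q A B C" "j \<in> support P"
  shows "j+1 \<notin> support Q \<Longrightarrow> A j = 0" "j-1 \<notin> support Q \<Longrightarrow> B j = 0" "j \<notin> support Q \<Longrightarrow> C j = 0"
    "weight Q (j+1) * A j + xcoef P j * C (j+1) = xcoef Q j * C j + (weight P j + 1) * A j"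
    "weight Q (j-1) * B j + ycoef P j * C (j-1) = ycoef Q j * C j + (weight P j - 1) * B j"
    "ycoef Q (j+1) * A j + xcoef P j * B (j+1) = weight Q j * C j + weight P j * C j"
    "xcoef Q (j-1) * B j + ycoef P j * A (j-1) = weight Q j * C j + (weight P j - 1) * C j - C j"
  using assms unfolding rank1_cocycle_def by blast+

lemma rank1_ext_linear:
  fixes xi eta zeta :: "int \<Rightarrow> 'k::field \<Rightarrow> 'k"
  assumes E: "is_ext (rank1_gmod P) (rank1_gmod Q) (xi, eta, zeta)"
    and m: "m \<in> gcomp (rank1_gmod P) j"
  shows "xi j m = m * xi j 1 \<and> eta j m = m * eta j 1 \<and> zeta j m = m * zeta j 1"
proof -
  let ?E = "ext_mod (rank1_gmod P) (rank1_gmod Q) (xi, eta, zeta)"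
  have G: "is_gmod pscale ?E" using E by (simp add: is_ext_def)
  have zero_in: "(0, 0) \<in> gcomp ?E j" by simp
  have zero: "xi j 0 = 0 \<and> eta j 0 = 0 \<and> zeta j 0 = 0"
    using is_gmod_linear[OF G zero_in zero_in, of "-1"] by simp
  show ?thesis
  proof (cases "j \<in> support P")
    case True
    then have u: "(0, 1) \<in> gcomp ?E j" by simp
    show ?thesis using is_gmod_linear[OF G u zero_in, of m] zero by simp
  next
    case False
    then show ?thesis using m zero by simp
  qed
qed

lemma rank1_ext_closed:
  fixes xi eta zeta :: "int \<Rightarrow> 'k::field \<Rightarrow> 'k"
  assumes E: "is_ext (rank1_gmod P) (rank1_gmod Q) (xi, eta, zeta)" and j: "j \<in> support P"
  shows "xcoef P j \<in> gcomp (rank1_gmod P) (j+1)" "ycoef P j \<in> gcomp (rank1_gmod P) (j-1)"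
    "xi j 1 \<in> gcomp (rank1_gmod Q) (j+1)" "eta j 1 \<in> gcomp (rank1_gmod Q) (j-1)"
    "zeta j 1 \<in> gcomp (rank1_gmod Q) j"
  using is_gmod_closed[OF E[unfolded is_ext_def], of "(0, 1)" j] j by simp_all

lemma rank1_ext_cocycle:
  fixes xi eta zeta :: "int \<Rightarrow> 'k::field \<Rightarrow> 'k"
  assumes E: "is_ext (rank1_gmod P) (rank1_gmod Q) (xi, eta, zeta)"
  shows "rank1_cocycle P Q (\<lambda>j. xi j 1) (\<lambda>j. eta j 1) (\<lambda>j. zeta j 1)"
  unfolding rank1_cocycle_def
proof (intro ballI conjI impI)
  fix j assume j: "j \<in> support P"
  let ?E = "ext_mod (rank1_gmod P) (rank1_gmod Q) (xi, eta, zeta)"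
  have G: "is_gmod pscale ?E" using E by (simp add: is_ext_def)
  have u: "(0, 1) \<in> gcomp ?E j" using j by simp
  note closed = rank1_ext_closed[OF E j]
  then show "j+1 \<notin> support Q \<Longrightarrow> xi j 1 = 0" "j-1 \<notin> support Q \<Longrightarrow> eta j 1 = 0"
    "j \<notin> support Q \<Longrightarrow> zeta j 1 = 0" by simp_all
  have lin: "xi j m = m * xi j 1 \<and> eta j m = m * eta j 1 \<and> zeta j m = m * zeta j 1" for m
    using rank1_ext_linear[OF E, of m j] j by simp
  note up = rank1_ext_linear[OF E closed(1)] and down = rank1_ext_linear[OF E closed(2)]
  note rel = is_gmod_relations[OF G u]
  show "weight Q (j+1) * xi j 1 + xcoef P j * zeta (j+1) 1 = xcoef Q j * zeta j 1 + (weight P j + 1) * xi j 1"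
    using rel(1) up lin[of "weight P j + 1"] by (simp add: algebra_simps)
  show "weight Q (j-1) * eta j 1 + ycoef P j * zeta (j-1) 1 = ycoef Q j * zeta j 1 + (weight P j - 1) * eta j 1"
    using rel(2) down lin[of "weight P j - 1"] by (simp add: algebra_simps)
  show "ycoef Q (j+1) * xi j 1 + xcoef P j * eta (j+1) 1 = weight Q j * zeta j 1 + weight P j * zeta j 1"
    using rel(3) up lin[of "weight P j"] by (simp add: algebra_simps)
  show "xcoef Q (j-1) * eta j 1 + ycoef P j * xi (j-1) 1 = weight Q j * zeta j 1 + (weight P j - 1) * zeta j 1 - zeta j 1"
    using rel(4) down lin[of "weight P j - 1"] by simp
qed

lemma rank1_relations_component:
  assumes "rank1_relations P" "n \<in> gcomp (rank1_gmod P) j"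
  shows "n * (ycoef P (j+1) * xcoef P j) = n * (weight P j)\<^sup>2"
    "n * (xcoef P (j-1) * ycoef P j) = n * (weight P j - 1)\<^sup>2"
    "xcoef P j * n \<in> gcomp (rank1_gmod P) (j+1)" "ycoef P j * n \<in> gcomp (rank1_gmod P) (j-1)"
  using assms unfolding rank1_relations_def by (cases "j \<in> support P"; auto)+

lemma rank1_cocycle_component:
  assumes "rank1_cocycle P Q A B C" "m \<in> gcomp (rank1_gmod P) j"
  shows "A j * m \<in> gcomp (rank1_gmod Q) (j+1)" "B j * m \<in> gcomp (rank1_gmod Q) (j-1)"
    "C j * m \<in> gcomp (rank1_gmod Q) j"
    "m * (weight Q (j+1) * A j + xcoef P j * C (j+1)) = m * (xcoef Q j * C j + (weight P j + 1) * A j)"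
    "m * (weight Q (j-1) * B j + ycoef P j * C (j-1)) = m * (ycoef Q j * C j + (weight P j - 1) * B j)"
    "m * (ycoef Q (j+1) * A j + xcoef P j * B (j+1)) = m * (weight Q j * C j + weight P j * C j)"
    "m * (xcoef Q (j-1) * B j + ycoef P j * A (j-1)) = m * (weight Q j * C j + (weight P j - 1) * C j - C j)"
  using rank1_cocycleD[OF assms(1)] assms(2) by (cases "j \<in> support P"; auto)+

lemma rank1_cocycle_is_ext:
  fixes A B C :: "int \<Rightarrow> 'k::field"
  assumes P: "rank1_relations P" and Q: "rank1_relations Q" and c: "rank1_cocycle P Q A B C"
  shows "is_ext (rank1_gmod P) (rank1_gmod Q) (lin_cocyc A B C)"
proof -
  let ?E = "ext_mod (rank1_gmod P) (rank1_gmod Q) (lin_cocyc A B C)"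
  have comp: "v \<in> gcomp ?E j \<longleftrightarrow> fst v \<in> gcomp (rank1_gmod Q) j \<and> snd v \<in> gcomp (rank1_gmod P) j" for v j
    by (auto simp: lin_cocyc_def mem_Times_iff simp del: rank1_gmod_simps)
  have "module.subspace pscale (gcomp ?E j)" for j
    unfolding module.subspace_def[OF module_pscale] lin_cocyc_def
    by (auto simp: pscale_def zero_prod_def)
  moreover have "gx ?E j v \<in> gcomp ?E (j+1) \<and> gy ?E j v \<in> gcomp ?E (j-1) \<and> gz ?E j v \<in> gcomp ?E j"
    if "v \<in> gcomp ?E j" for j v
  proof -
    from that obtain n m where v: "v = (n, m)" and n: "n \<in> gcomp (rank1_gmod Q) j"
      and m: "m \<in> gcomp (rank1_gmod P) j" by (cases v) (simp add: comp)
    show ?thesis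
      using rank1_relations_component(3,4)[OF Q n] rank1_relations_component(3,4)[OF P m] rank1_cocycle_component(1-3)[OF c m] n m
      unfolding v comp by (auto simp: lin_cocyc_def)
  qed
  moreover have "gx ?E j (pscale a u + v) = pscale a (gx ?E j u) + gx ?E j v \<and>
      gy ?E j (pscale a u + v) = pscale a (gy ?E j u) + gy ?E j v \<and>
      gz ?E j (pscale a u + v) = pscale a (gz ?E j u) + gz ?E j v" for j u v a
    by (cases u; cases v) (simp add: lin_cocyc_def algebra_simps)
  moreover have "gz ?E (j+1) (gx ?E j v) = gx ?E j (gz ?E j v + v) \<and>
      gz ?E (j-1) (gy ?E j v) = gy ?E j (gz ?E j v - v) \<and>
      gy ?E (j+1) (gx ?E j v) = gz ?E j (gz ?E j v) \<and>
      gx ?E (j-1) (gy ?E j v) = gz ?E j (gz ?E j v - v) - (gz ?E j v - v)"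
    if "v \<in> gcomp ?E j" for j v
  proof -
    from that obtain n m where v: "v = (n, m)" and n: "n \<in> gcomp (rank1_gmod Q) j"
      and m: "m \<in> gcomp (rank1_gmod P) j" by (cases v) (simp add: comp)
    note facts = rank1_relations_component(1,2)[OF Q n] rank1_relations_component(1,2)[OF P m]
      rank1_cocycle_component(4-7)[OF c m, unfolded of_int_add of_int_diff of_int_1]
    show ?thesis unfolding v lin_cocyc_def
      apply (simp only: ext_mod_simps rank1_gmod_simps fst_conv snd_conv add_Pair diff_Pair
          prod.inject of_int_add of_int_diff of_int_1)
      by (intro conjI; (algebra | insert facts, algebra))
  qed
  ultimately show ?thesis
    unfolding is_ext_def is_gmod_def using vector_space_pscale by blast
qed

lemma rank1_cocycle_scale:
  assumes "rank1_cocycle P Q A B C"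
  shows "rank1_cocycle P Q (\<lambda>j. a * A j) (\<lambda>j. a * B j) (\<lambda>j. a * C j)"
proof -
  have scale: "x = y \<Longrightarrow> a * x = a * y" for x y :: 'a by simp
  show ?thesis
    using assms unfolding rank1_cocycle_def
    by (auto dest!: bspec intro!: ballI dest: scale simp: algebra_simps)
qed

text \<open>
  \<open>g\<close> is the component \<open>M \<rightarrow> N\<close> of an equivalence of extensions \<open>(n, m) \<mapsto> (n + g\<^sub>j m, m)\<close>.
\<close>

definition rank1_coboundary :: "'k::field rank1 \<Rightarrow> 'k rank1 \<Rightarrow> (int \<Rightarrow> 'k) \<Rightarrow> (int \<Rightarrow> 'k) \<Rightarrow> (int \<Rightarrow> 'k) \<Rightarrow> bool" where
  "rank1_coboundary P Q A B C \<longleftrightarrow> (\<exists>g. (\<forall>j. j \<notin> support Q \<longrightarrow> g j = 0) \<and> (\<forall>j\<in>support P.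
     A j = xcoef Q j * g j - g (j+1) * xcoef P j \<and>
     B j = ycoef Q j * g j - g (j-1) * ycoef P j \<and>
     C j = (zshift P - zshift Q) * g j))"

lemma rank1_coboundary_ext_equiv:
  fixes xi eta zeta :: "int \<Rightarrow> 'k::field \<Rightarrow> 'k"
  assumes E: "is_ext (rank1_gmod P) (rank1_gmod Q) (xi, eta, zeta)"
    and cob: "rank1_coboundary P Q (\<lambda>j. xi j 1 - A j) (\<lambda>j. eta j 1 - B j) (\<lambda>j. zeta j 1 - C j)"
  shows "ext_equiv (rank1_gmod P) (rank1_gmod Q) (xi, eta, zeta) (lin_cocyc A B C)"
proof -
  let ?E = "ext_mod (rank1_gmod P) (rank1_gmod Q) (xi, eta, zeta)"
  let ?E' = "ext_mod (rank1_gmod P) (rank1_gmod Q) (lin_cocyc A B C)"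
  obtain g where g_supp: "\<forall>j. j \<notin> support Q \<longrightarrow> g j = 0"
    and g: "\<forall>j\<in>support P. xi j 1 - A j = xcoef Q j * g j - g (j+1) * xcoef P j \<and>
       eta j 1 - B j = ycoef Q j * g j - g (j-1) * ycoef P j \<and>
       zeta j 1 - C j = (zshift P - zshift Q) * g j"
    using cob unfolding rank1_coboundary_def by blast
  define f where "f j p = (fst p + g j * snd p, snd p)" for j and p :: "'k \<times> 'k"
  have intertwines: "xi j m + g (j+1) * (xcoef P j * m) = xcoef Q j * (g j * m) + A j * m \<and>
      eta j m + g (j-1) * (ycoef P j * m) = ycoef Q j * (g j * m) + B j * m \<and>
      zeta j m + g j * (weight P j * m) = weight Q j * (g j * m) + C j * m"
    if m: "m \<in> gcomp (rank1_gmod P) j" for j m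
  proof (cases "j \<in> support P")
    case True
    with g have "xi j 1 - A j = xcoef Q j * g j - g (j+1) * xcoef P j"
      "eta j 1 - B j = ycoef Q j * g j - g (j-1) * ycoef P j"
      "zeta j 1 - C j = (zshift P - zshift Q) * g j" by blast+
    with rank1_ext_linear[OF E m] show ?thesis by algebra
  next
    case False
    then show ?thesis using m rank1_ext_linear[OF E m] by simp
  qed
  have "gmod_hom pscale pscale ?E ?E' f"
    unfolding gmod_hom_def
  proof (intro allI ballI conjI)
    fix j v assume "v \<in> gcomp ?E j"
    then obtain n m where v: "v = (n, m)" and n: "n \<in> gcomp (rank1_gmod Q) j"
      and m: "m \<in> gcomp (rank1_gmod P) j" by (cases v) auto
    show "f j v \<in> gcomp ?E' j"
      using n m g_supp unfolding v f_def lin_cocyc_def by (cases "j \<in> support Q") auto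
    show "f (j+1) (gx ?E j v) = gx ?E' j (f j v)" "f (j-1) (gy ?E j v) = gy ?E' j (f j v)"
      "f j (gz ?E j v) = gz ?E' j (f j v)"
      using intertwines[OF m] unfolding v f_def lin_cocyc_def by (simp_all add: algebra_simps)
    show "f j (pscale a u + v) = pscale a (f j u) + f j v" for u a
      unfolding f_def pscale_def by (simp add: algebra_simps)
  qed
  then show ?thesis unfolding ext_equiv_def f_def by auto
qed

lemma ext_equiv_rank1_shear:
  fixes c c' :: "'k::field cocyc"
  assumes "ext_equiv (rank1_gmod P) (rank1_gmod Q) c c'"
  obtains f g where "gmod_hom pscale pscale (ext_mod (rank1_gmod P) (rank1_gmod Q) c)
      (ext_mod (rank1_gmod P) (rank1_gmod Q) c') f"
    and "\<And>j p. p \<in> gcomp (ext_mod (rank1_gmod P) (rank1_gmod Q) c) j \<Longrightarrow> f j p = (fst p + g j * snd p, snd p)"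
proof -
  obtain xi eta zeta where c: "c = (xi, eta, zeta)" by (cases c)
  let ?E = "ext_mod (rank1_gmod P) (rank1_gmod Q) c"
  obtain f where hom: "gmod_hom pscale pscale ?E (ext_mod (rank1_gmod P) (rank1_gmod Q) c') f"
    and fix_N: "\<forall>j. \<forall>n\<in>gcomp (rank1_gmod Q) j. f j (n, 0) = (n, 0)"
    and over_M: "\<forall>j. \<forall>p\<in>gcomp (rank1_gmod Q) j \<times> gcomp (rank1_gmod P) j. snd (f j p) = snd p"
    using assms unfolding ext_equiv_def by blast
  have "f j p = (fst p + fst (f j (0, 1)) * snd p, snd p)" if p: "p \<in> gcomp ?E j" for j p
  proof (cases "j \<in> support P")
    case True
    obtain a b where ab: "p = (a, b)" and a: "a \<in> gcomp (rank1_gmod Q) j" using p c by (cases p) auto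
    have u: "(0, 1) \<in> gcomp ?E j" and w: "(a, 0) \<in> gcomp ?E j" using True a c by auto
    have "f j (pscale b (0, 1) + (a, 0)) = pscale b (f j (0, 1)) + f j (a, 0)"
      using hom w u unfolding gmod_hom_def by blast
    moreover have "snd (f j (0, 1)) = 1" using over_M True by simp
    moreover have "f j (a, 0) = (a, 0)" using fix_N a by blast
    ultimately show ?thesis unfolding ab by (cases "f j (0, 1)") (simp add: algebra_simps)
  next
    case False
    then obtain a where "p = (a, 0)" and "a \<in> gcomp (rank1_gmod Q) j" using p c by (cases p) auto
    then show ?thesis using fix_N by simp
  qed
  note shear = this
  show thesis by (rule that[OF hom], rule shear)
qed

lemma ext_equiv_rank1_coboundary:
  fixes xi eta zeta xi' eta' zeta' :: "int \<Rightarrow> 'k::field \<Rightarrow> 'k"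
  assumes E: "is_ext (rank1_gmod P) (rank1_gmod Q) (xi, eta, zeta)"
    and equiv: "ext_equiv (rank1_gmod P) (rank1_gmod Q) (xi, eta, zeta) (xi', eta', zeta')"
  shows "rank1_coboundary P Q (\<lambda>j. xi j 1 - xi' j 1) (\<lambda>j. eta j 1 - eta' j 1) (\<lambda>j. zeta j 1 - zeta' j 1)"
proof -
  let ?E = "ext_mod (rank1_gmod P) (rank1_gmod Q) (xi, eta, zeta)"
  let ?E' = "ext_mod (rank1_gmod P) (rank1_gmod Q) (xi', eta', zeta')"
  obtain f g where hom: "gmod_hom pscale pscale ?E ?E' f"
    and shear: "\<And>j p. p \<in> gcomp ?E j \<Longrightarrow> f j p = (fst p + g j * snd p, snd p)"
    using ext_equiv_rank1_shear[OF equiv] by blast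
  define g' where "g' j = (if j \<in> support P then g j else 0)" for j
  have "g' j = 0" if "j \<notin> support Q" for j
  proof (cases "j \<in> support P")
    case True
    then have "(0, 1) \<in> gcomp ?E j" by simp
    then have "f j (0, 1) \<in> gcomp ?E' j" using hom unfolding gmod_hom_def by blast
    then show ?thesis using shear[OF \<open>(0, 1) \<in> gcomp ?E j\<close>] that True by (simp add: g'_def)
  qed (simp add: g'_def)
  moreover have "xi j 1 - xi' j 1 = xcoef Q j * g' j - g' (j+1) * xcoef P j \<and>
      eta j 1 - eta' j 1 = ycoef Q j * g' j - g' (j-1) * ycoef P j \<and>
      zeta j 1 - zeta' j 1 = (zshift P - zshift Q) * g' j" if j: "j \<in> support P" for j
  proof -
    have u: "(0, 1) \<in> gcomp ?E j" using j by simp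
    note closed = is_gmod_closed[OF E[unfolded is_ext_def] u]
    have "f (j+1) (gx ?E j (0, 1)) = gx ?E' j (f j (0, 1))" "f (j-1) (gy ?E j (0, 1)) = gy ?E' j (f j (0, 1))"
      "f j (gz ?E j (0, 1)) = gz ?E' j (f j (0, 1))"
      using hom u unfolding gmod_hom_def by blast+
    moreover have "g' (j+1) * xcoef P j = g (j+1) * xcoef P j" "g' (j-1) * ycoef P j = g (j-1) * ycoef P j"
      using closed(1,2) j by (auto simp: g'_def)
    ultimately show ?thesis using shear[OF u] shear[OF closed(1)] shear[OF closed(2)] shear[OF closed(3)] j
      by (simp add: g'_def algebra_simps)
  qed
  ultimately show ?thesis unfolding rank1_coboundary_def by blast
qed

lemma rank1_coboundary_multiple_unique:
  assumes "rank1_coboundary P Q (\<lambda>j. A' j - a * A j) (\<lambda>j. B' j - a * B j) (\<lambda>j. C' j - a * C j)"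
    and "rank1_coboundary P Q (\<lambda>j. A' j - b * A j) (\<lambda>j. B' j - b * B j) (\<lambda>j. C' j - b * C j)"
    and "\<not> rank1_coboundary P Q A B C"
  shows "a = b"
proof (rule ccontr)
  assume ne: "a \<noteq> b"
  obtain g h where g_supp: "\<forall>j. j \<notin> support Q \<longrightarrow> g j = 0" and h_supp: "\<forall>j. j \<notin> support Q \<longrightarrow> h j = 0"
    and g: "\<forall>j\<in>support P. A' j - a * A j = xcoef Q j * g j - g (j+1) * xcoef P j \<and>
       B' j - a * B j = ycoef Q j * g j - g (j-1) * ycoef P j \<and> C' j - a * C j = (zshift P - zshift Q) * g j"
    and h: "\<forall>j\<in>support P. A' j - b * A j = xcoef Q j * h j - h (j+1) * xcoef P j \<and>
       B' j - b * B j = ycoef Q j * h j - h (j-1) * ycoef P j \<and> C' j - b * C j = (zshift P - zshift Q) * h j"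
    using assms(1,2) unfolding rank1_coboundary_def by blast
  define k where "k j = (h j - g j) / (a - b)" for j
  have d: "a - b \<noteq> 0" using ne by simp
  have kd: "(a - b) * k j = h j - g j" for j
    using d by (simp add: k_def)
  have "rank1_coboundary P Q A B C"
    unfolding rank1_coboundary_def
  proof (intro exI[of _ k] conjI allI impI ballI)
    show "k j = 0" if "j \<notin> support Q" for j
      using that g_supp h_supp by (simp add: k_def)
    fix j assume j: "j \<in> support P"
    have "(a - b) * A j = (a - b) * (xcoef Q j * k j - k (j+1) * xcoef P j)"
      "(a - b) * B j = (a - b) * (ycoef Q j * k j - k (j-1) * ycoef P j)"
      "(a - b) * C j = (a - b) * ((zshift P - zshift Q) * k j)"
      using g[rule_format, OF j] h[rule_format, OF j] kd[of j] kd[of "j+1"] kd[of "j-1"]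
      by (elim conjE; algebra)+
    with d show "A j = xcoef Q j * k j - k (j+1) * xcoef P j"
      "B j = ycoef Q j * k j - k (j-1) * ycoef P j" "C j = (zshift P - zshift Q) * k j"
      by simp_all
  qed
  with assms(3) show False ..
qed

section \<open>Criteria for \<open>Ext\<^sup>1\<close>\<close>

lemma Ext1_one_rank1I:
  fixes A B C :: "int \<Rightarrow> 'k::field"
  assumes P: "rank1_relations P" and Q: "rank1_relations Q"
    and cocycle: "rank1_cocycle P Q A B C"
    and nontrivial: "\<not> rank1_coboundary P Q A B C"
    and spanning: "\<And>A' B' C'. rank1_cocycle P Q A' B' C' \<Longrightarrow>
      \<exists>a. rank1_coboundary P Q (\<lambda>j. A' j - a * A j) (\<lambda>j. B' j - a * B j) (\<lambda>j. C' j - a * C j)"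
  shows "Ext1_one (rank1_gmod P) (rank1_gmod Q)"
  unfolding Ext1_one_def
proof (intro exI conjI allI impI)
  have scaled: "cscale a (lin_cocyc A B C) = lin_cocyc (\<lambda>j. a * A j) (\<lambda>j. a * B j) (\<lambda>j. a * C j)" for a
    by (simp add: cscale_def lin_cocyc_def fun_eq_iff mult.assoc)
  have scaled_ext: "is_ext (rank1_gmod P) (rank1_gmod Q) (cscale a (lin_cocyc A B C))" for a
    unfolding scaled by (rule rank1_cocycle_is_ext[OF P Q rank1_cocycle_scale[OF cocycle]])
  show "is_ext (rank1_gmod P) (rank1_gmod Q) (lin_cocyc A B C)"
    by (rule rank1_cocycle_is_ext[OF P Q cocycle])
  fix c assume E: "is_ext (rank1_gmod P) (rank1_gmod Q) c"
  obtain xi eta zeta where c: "c = (xi, eta, zeta)" by (cases c)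
  obtain a where a: "rank1_coboundary P Q (\<lambda>j. xi j 1 - a * A j) (\<lambda>j. eta j 1 - a * B j) (\<lambda>j. zeta j 1 - a * C j)"
    using spanning[OF rank1_ext_cocycle[OF E[unfolded c]]] by blast
  have "ext_equiv (rank1_gmod P) (rank1_gmod Q) c (cscale a (lin_cocyc A B C))"
    unfolding c scaled using E[unfolded c] a by (rule rank1_coboundary_ext_equiv)
  moreover have "b = a" if "ext_equiv (rank1_gmod P) (rank1_gmod Q) c (cscale b (lin_cocyc A B C))" for b
  proof (rule rank1_coboundary_multiple_unique[OF _ a nontrivial])
    show "rank1_coboundary P Q (\<lambda>j. xi j 1 - b * A j) (\<lambda>j. eta j 1 - b * B j) (\<lambda>j. zeta j 1 - b * C j)"
      using ext_equiv_rank1_coboundary[OF E[unfolded c] that[unfolded c scaled, unfolded lin_cocyc_def]] by simp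
  qed
  ultimately show "\<exists>!a. ext_equiv (rank1_gmod P) (rank1_gmod Q) c (cscale a (lin_cocyc A B C))" by blast
qed

lemma Ext1_zero_rank1I:
  assumes "\<And>A B C. rank1_cocycle P Q A B C \<Longrightarrow> rank1_coboundary P Q A B C"
  shows "Ext1_zero (rank1_gmod P) (rank1_gmod Q)"
  unfolding Ext1_zero_def
proof (intro allI impI)
  fix c :: "'a cocyc" assume E: "is_ext (rank1_gmod P) (rank1_gmod Q) c"
  obtain xi eta zeta where c: "c = (xi, eta, zeta)" by (cases c)
  have "rank1_coboundary P Q (\<lambda>j. xi j 1 - 0) (\<lambda>j. eta j 1 - 0) (\<lambda>j. zeta j 1 - 0)"
    using assms[OF rank1_ext_cocycle[OF E[unfolded c]]] by simp
  from rank1_coboundary_ext_equiv[OF E[unfolded c] this]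
  show "ext_equiv (rank1_gmod P) (rank1_gmod Q) c zero_cocyc"
    unfolding c by (simp add: zero_cocyc_def lin_cocyc_def)
qed

lemma rank1_cocycle_imp_coboundary:
  assumes P: "rank1_relations P" and ne: "zshift P \<noteq> zshift Q" and cocycle: "rank1_cocycle P Q A B C"
  shows "rank1_coboundary P Q A B C"
  unfolding rank1_coboundary_def
proof (intro exI conjI allI impI ballI)
  define g where "g j = (if j \<in> support Q then C j / (zshift P - zshift Q) else 0)" for j
  show "g j = 0" if "j \<notin> support Q" for j
    using that by (simp add: g_def)
  have C: "C j = (zshift P - zshift Q) * g j" if "j \<in> support P" for j
    using cocycle that ne unfolding rank1_cocycle_def g_def by auto
  fix j assume j: "j \<in> support P"
  then show "C j = (zshift P - zshift Q) * g j" by (rule C)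
  have "xcoef P j * C (j+1) = xcoef P j * ((zshift P - zshift Q) * g (j+1))"
    "ycoef P j * C (j-1) = ycoef P j * ((zshift P - zshift Q) * g (j-1))"
    using C P j unfolding rank1_relations_def by (metis mult_zero_left)+
  moreover note rank1_cocycleD(4,5)[OF cocycle j]
  ultimately have "(zshift P - zshift Q) * A j = (zshift P - zshift Q) * (xcoef Q j * g j - g (j+1) * xcoef P j)"
    "(zshift P - zshift Q) * B j = (zshift P - zshift Q) * (ycoef Q j * g j - g (j-1) * ycoef P j)"
    using C[OF j] unfolding of_int_add of_int_diff of_int_1 by algebra+
  with ne show "A j = xcoef Q j * g j - g (j+1) * xcoef P j" "B j = ycoef Q j * g j - g (j-1) * ycoef P j"
    by simp_all
qed

lemma Ext1_zero_rank1_zshift_ne: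
  assumes "rank1_relations P" "zshift P \<noteq> zshift Q"
  shows "Ext1_zero (rank1_gmod P) (rank1_gmod Q)"
  using Ext1_zero_rank1I rank1_cocycle_imp_coboundary[OF assms] by blast

lemma not_rank1_coboundary_same_zshift:
  assumes "zshift P = zshift Q" "j \<in> support P" "C j \<noteq> 0"
  shows "\<not> rank1_coboundary P Q A B C"
  using assms unfolding rank1_coboundary_def by auto

lemma gExt1_k_deg0_rank1I:
  fixes P Q :: "'k::field_char_0 rank1"
  assumes "rank1_relations P" "zshift P = zshift Q" "Ext1_one (rank1_gmod P) (rank1_gmod Q)"
  shows "gExt1_k_deg0 (rank1_gmod P) (rank1_gmod Q)"
  unfolding gExt1_k_deg0_def shift_zero
proof (intro conjI allI impI)
  fix d :: int assume "d \<noteq> 0"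
  with assms(1,2) show "Ext1_zero (rank1_gmod P) (shift (rank1_gmod Q) d)"
    unfolding shift_rank1_gmod by (intro Ext1_zero_rank1_zshift_ne) (auto simp: rank1_shift_def)
qed (fact assms(3))

lemma gExt1_zero_rank1I:
  assumes "rank1_relations P" "\<And>d. zshift P \<noteq> zshift Q + of_int d"
  shows "gExt1_zero (rank1_gmod P) (rank1_gmod Q)"
  using assms Ext1_zero_rank1_zshift_ne[OF assms(1)]
  unfolding gExt1_zero_def shift_rank1_gmod by (auto simp: rank1_shift_def)

section \<open>The modules \<open>X\<close>, \<open>Y\<close> and \<open>M\<^sub>\<lambda>\<close>\<close>

lemma ex_int_antidifference: "\<exists>g :: int \<Rightarrow> 'a::ab_group_add. \<forall>j. g (j+1) = g j + h j"
proof -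
  define g where "g j = (if 0 \<le> j then (\<Sum>i<nat j. h (int i)) else - (\<Sum>i<nat (-j). h (- int i - 1)))" for j
  have "g (j+1) = g j + h j" for j
  proof (cases "0 \<le> j")
    case True
    then have "nat (j+1) = Suc (nat j)" by simp
    with True show ?thesis unfolding g_def by simp
  next
    case neg: False
    show ?thesis
    proof (cases "j = -1")
      case True
      then show ?thesis unfolding g_def by simp
    next
      case False
      with neg have n: "nat (-j) = Suc (nat (-(j+1)))" by simp
      moreover have "- int (nat (- (j + 1))) - 1 = j" "\<not> 0 \<le> j + 1" using neg False by simp_all
      ultimately show ?thesis using neg unfolding g_def by simp
    qed
  qed
  then show ?thesis by blast
qed

definition X_rank1 :: "'k::field rank1" where
  "X_rank1 = \<lparr>support = {j. j \<le> 0}, xcoef = (\<lambda>j. if j < 0 then (of_int j)\<^sup>2 else 0),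
     ycoef = (\<lambda>j. if j \<le> 0 then 1 else 0), zshift = 0\<rparr>"

definition Y_rank1 :: "'k::field rank1" where
  "Y_rank1 = \<lparr>support = {j. 1 \<le> j}, xcoef = (\<lambda>j. if 1 \<le> j then 1 else 0),
     ycoef = (\<lambda>j. if 1 \<le> j then (of_int j - 1)\<^sup>2 else 0), zshift = 0\<rparr>"

definition M_rank1 :: "'k::field \<Rightarrow> 'k rank1" where
  "M_rank1 la = \<lparr>support = UNIV, xcoef = (\<lambda>j. if 0 \<le> j then 1 else (of_int j - la)\<^sup>2),
     ycoef = (\<lambda>j. if j \<le> 0 then 1 else (of_int j - 1 - la)\<^sup>2), zshift = la\<rparr>"

lemma rank1_support_zshift [simp]:
  "support X_rank1 = {j. j \<le> 0}" "zshift X_rank1 = 0"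
  "support Y_rank1 = {j. 1 \<le> j}" "zshift Y_rank1 = 0"
  "support (M_rank1 la) = UNIV" "zshift (M_rank1 la) = la"
  by (simp_all add: X_rank1_def Y_rank1_def M_rank1_def)

lemma Xmod_rank1: "Xmod = rank1_gmod X_rank1"
  by (simp add: Xmod_def rank1_gmod_def X_rank1_def fun_eq_iff)

lemma Ymod_rank1: "Ymod = rank1_gmod Y_rank1"
  by (simp add: Ymod_def rank1_gmod_def Y_rank1_def fun_eq_iff)

lemma Mmod_rank1: "Mmod la = rank1_gmod (M_rank1 la)"
  by (simp add: Mmod_def rank1_gmod_def M_rank1_def)

lemma rank1_relations_X: "rank1_relations X_rank1"
  unfolding rank1_relations_def X_rank1_def by (auto simp: power2_eq_square algebra_simps)

lemma rank1_relations_Y: "rank1_relations Y_rank1"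
  unfolding rank1_relations_def
proof
  fix j :: int assume "j \<in> support Y_rank1"
  then show "(j+1 \<notin> support Y_rank1 \<longrightarrow> xcoef Y_rank1 j = 0) \<and> (j-1 \<notin> support Y_rank1 \<longrightarrow> ycoef Y_rank1 j = 0) \<and>
      ycoef Y_rank1 (j+1) * xcoef Y_rank1 j = (weight Y_rank1 j)\<^sup>2 \<and>
      xcoef Y_rank1 (j-1) * ycoef Y_rank1 j = (weight Y_rank1 j - 1)\<^sup>2"
    by (cases "j = 1") (auto simp: Y_rank1_def)
qed

lemma rank1_relations_M: "rank1_relations (M_rank1 la)"
  unfolding rank1_relations_def M_rank1_def by (auto simp: algebra_simps)

lemma xcoef_M_nonzero: "(la :: 'k::field_char_0) \<notin> \<int> \<Longrightarrow> xcoef (M_rank1 la) j \<noteq> 0"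
  by (auto simp: M_rank1_def)

lemma Ext1_one_Xmod_Xmod: "Ext1_one (Xmod :: 'k::field_char_0 gmod) Xmod"
  unfolding Xmod_rank1
proof (rule Ext1_one_rank1I[OF rank1_relations_X rank1_relations_X])
  show "rank1_cocycle X_rank1 X_rank1 (\<lambda>j. 2 * of_int j) (\<lambda>_. 0) (\<lambda>_. 1 :: 'k)"
    unfolding rank1_cocycle_def by (auto simp: X_rank1_def algebra_simps)
  show "\<not> rank1_coboundary X_rank1 X_rank1 (\<lambda>j. 2 * of_int j) (\<lambda>_. 0) (\<lambda>_. 1 :: 'k)"
    by (rule not_rank1_coboundary_same_zshift[of _ _ 0]) (simp_all add: X_rank1_def)
  fix A B C :: "int \<Rightarrow> 'k" assume cocycle: "rank1_cocycle X_rank1 X_rank1 A B C"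
  have A: "A j + (of_int j)\<^sup>2 * B (j+1) = 2 * of_int j * C j" if "j < 0" for j
    using rank1_cocycleD(6)[OF cocycle, of j] that by (simp add: X_rank1_def)
  have C_step: "C (j-1) = C j" if "j \<le> 0" for j
    using rank1_cocycleD(5)[OF cocycle, of j] that by (simp add: X_rank1_def algebra_simps)
  have C: "C j = C 0" if "j \<le> 0" for j
    using that by (induction j rule: int_le_induct) (simp_all add: C_step)
  obtain h where h: "\<forall>j. h (j+1) = h j + B (j+1)"
    using ex_int_antidifference[of "\<lambda>j. B (j+1)"] by blast
  define g where "g j = (if j \<le> 0 then h j else 0)" for j
  have "A 0 = 0" using rank1_cocycleD(1)[OF cocycle, of 0] by (simp add: X_rank1_def)
  show "\<exists>a. rank1_coboundary X_rank1 X_rank1 (\<lambda>j. A j - a * (2 * of_int j)) (\<lambda>j. B j - a * 0) (\<lambda>j. C j - a * 1)"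
    unfolding rank1_coboundary_def
  proof (intro exI[of _ "C 0"] exI[of _ g] conjI allI impI ballI)
    fix j :: int assume "j \<in> support X_rank1"
    then have j: "j \<le> 0" by (simp add: X_rank1_def)
    show "C j - C 0 * 1 = (zshift X_rank1 - zshift X_rank1) * g j" using C[OF j] by simp
    show "B j - C 0 * 0 = ycoef X_rank1 j * g j - g (j-1) * ycoef X_rank1 j"
      using h[rule_format, of "j-1"] j by (simp add: g_def X_rank1_def)
    show "A j - C 0 * (2 * of_int j) = xcoef X_rank1 j * g j - g (j+1) * xcoef X_rank1 j"
    proof (cases "j = 0")
      case False
      with j A[of j] C[OF j] h[rule_format, of j] show ?thesis
        by (simp add: g_def X_rank1_def algebra_simps)
    qed (simp add: \<open>A 0 = 0\<close> X_rank1_def)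
  qed (simp add: g_def X_rank1_def)
qed

lemma Ext1_one_Ymod_Ymod: "Ext1_one (Ymod :: 'k::field_char_0 gmod) Ymod"
  unfolding Ymod_rank1
proof (rule Ext1_one_rank1I[OF rank1_relations_Y rank1_relations_Y])
  show "rank1_cocycle Y_rank1 Y_rank1 (\<lambda>_. 0) (\<lambda>j. 2 * (of_int j - 1)) (\<lambda>_. 1 :: 'k)"
    unfolding rank1_cocycle_def by (auto simp: Y_rank1_def algebra_simps)
  show "\<not> rank1_coboundary Y_rank1 Y_rank1 (\<lambda>_. 0) (\<lambda>j. 2 * (of_int j - 1)) (\<lambda>_. 1 :: 'k)"
    by (rule not_rank1_coboundary_same_zshift[of _ _ 1]) (simp_all add: Y_rank1_def)
  fix A B C :: "int \<Rightarrow> 'k" assume cocycle: "rank1_cocycle Y_rank1 Y_rank1 A B C"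
  have B: "(of_int j)\<^sup>2 * A j + B (j+1) = 2 * of_int j * C j" if "1 \<le> j" for j
    using rank1_cocycleD(6)[OF cocycle, of j] that by (simp add: Y_rank1_def)
  have C_step: "C (j+1) = C j" if "1 \<le> j" for j
    using rank1_cocycleD(4)[OF cocycle, of j] that by (simp add: Y_rank1_def algebra_simps)
  have C: "C j = C 1" if "1 \<le> j" for j
    using that by (induction j rule: int_ge_induct) (simp_all add: C_step)
  obtain h where h: "\<forall>j. h (j+1) = h j - A j"
    using ex_int_antidifference[of "\<lambda>j. - A j"] by (auto simp: algebra_simps)
  define g where "g j = (if 1 \<le> j then h j else 0)" for j
  have "B 1 = 0" using rank1_cocycleD(2)[OF cocycle, of 1] by (simp add: Y_rank1_def)
  show "\<exists>a. rank1_coboundary Y_rank1 Y_rank1 (\<lambda>j. A j - a * 0) (\<lambda>j. B j - a * (2 * (of_int j - 1))) (\<lambda>j. C j - a * 1)"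
    unfolding rank1_coboundary_def
  proof (intro exI[of _ "C 1"] exI[of _ g] conjI allI impI ballI)
    fix j :: int assume "j \<in> support Y_rank1"
    then have j: "1 \<le> j" by (simp add: Y_rank1_def)
    show "C j - C 1 * 1 = (zshift Y_rank1 - zshift Y_rank1) * g j" using C[OF j] by simp
    show "A j - C 1 * 0 = xcoef Y_rank1 j * g j - g (j+1) * xcoef Y_rank1 j"
      using h[rule_format, of j] j by (simp add: g_def Y_rank1_def)
    show "B j - C 1 * (2 * (of_int j - 1)) = ycoef Y_rank1 j * g j - g (j-1) * ycoef Y_rank1 j"
    proof (cases "j = 1")
      case False
      with j have "1 \<le> j - 1" by simp
      then have g: "g j = h (j-1) - A (j-1)" "g (j-1) = h (j-1)"
        using h[rule_format, of "j-1"] j by (simp_all add: g_def)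
      have "B j = 2 * (of_int j - 1) * C 1 - (of_int j - 1)\<^sup>2 * A (j-1)"
        using B[of "j-1"] C[of "j-1"] \<open>1 \<le> j - 1\<close> by (simp add: algebra_simps)
      then show ?thesis unfolding g using j by (simp add: Y_rank1_def algebra_simps)
    qed (simp add: \<open>B 1 = 0\<close> Y_rank1_def)
  qed (simp add: g_def Y_rank1_def)
qed

lemma Ext1_one_Xmod_Ymod: "Ext1_one (Xmod :: 'k::field_char_0 gmod) Ymod"
  unfolding Xmod_rank1 Ymod_rank1
proof (rule Ext1_one_rank1I[OF rank1_relations_X rank1_relations_Y])
  show "rank1_cocycle X_rank1 Y_rank1 (\<lambda>j. if j = 0 then 1 else 0) (\<lambda>_. 0) (\<lambda>_. 0 :: 'k)"
    unfolding rank1_cocycle_def by (auto simp: X_rank1_def Y_rank1_def)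
  show "\<not> rank1_coboundary X_rank1 Y_rank1 (\<lambda>j. if j = 0 then 1 else 0) (\<lambda>_. 0) (\<lambda>_. 0 :: 'k)"
    unfolding rank1_coboundary_def by (auto simp: X_rank1_def Y_rank1_def)
  fix A B C :: "int \<Rightarrow> 'k" assume cocycle: "rank1_cocycle X_rank1 Y_rank1 A B C"
  show "\<exists>a. rank1_coboundary X_rank1 Y_rank1 (\<lambda>j. A j - a * (if j = 0 then 1 else 0)) (\<lambda>j. B j - a * 0) (\<lambda>j. C j - a * 0)"
    unfolding rank1_coboundary_def
  proof (intro exI[of _ "A 0"] exI[of _ "\<lambda>_. 0"] conjI allI impI ballI)
    fix j :: int assume "j \<in> support X_rank1"
    then have j: "j \<le> 0" by (simp add: X_rank1_def)
    show "A j - A 0 * (if j = 0 then 1 else 0) = xcoef Y_rank1 j * 0 - 0 * xcoef X_rank1 j"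
      using rank1_cocycleD(1)[OF cocycle, of j] j by (auto simp: X_rank1_def Y_rank1_def)
    show "B j - A 0 * 0 = ycoef Y_rank1 j * 0 - 0 * ycoef X_rank1 j"
      using rank1_cocycleD(2)[OF cocycle, of j] j by (simp add: X_rank1_def Y_rank1_def)
    show "C j - A 0 * 0 = (zshift X_rank1 - zshift Y_rank1) * 0"
      using rank1_cocycleD(3)[OF cocycle, of j] j by (simp add: X_rank1_def Y_rank1_def)
  qed simp
qed

lemma Ext1_one_Ymod_Xmod: "Ext1_one (Ymod :: 'k::field_char_0 gmod) Xmod"
  unfolding Xmod_rank1 Ymod_rank1
proof (rule Ext1_one_rank1I[OF rank1_relations_Y rank1_relations_X])
  show "rank1_cocycle Y_rank1 X_rank1 (\<lambda>_. 0) (\<lambda>j. if j = 1 then 1 else 0) (\<lambda>_. 0 :: 'k)"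
    unfolding rank1_cocycle_def by (auto simp: X_rank1_def Y_rank1_def)
  show "\<not> rank1_coboundary Y_rank1 X_rank1 (\<lambda>_. 0) (\<lambda>j. if j = 1 then 1 else 0) (\<lambda>_. 0 :: 'k)"
    unfolding rank1_coboundary_def by (auto simp: X_rank1_def Y_rank1_def)
  fix A B C :: "int \<Rightarrow> 'k" assume cocycle: "rank1_cocycle Y_rank1 X_rank1 A B C"
  show "\<exists>a. rank1_coboundary Y_rank1 X_rank1 (\<lambda>j. A j - a * 0) (\<lambda>j. B j - a * (if j = 1 then 1 else 0)) (\<lambda>j. C j - a * 0)"
    unfolding rank1_coboundary_def
  proof (intro exI[of _ "B 1"] exI[of _ "\<lambda>_. 0"] conjI allI impI ballI)
    fix j :: int assume "j \<in> support Y_rank1"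
    then have j: "1 \<le> j" by (simp add: Y_rank1_def)
    show "A j - B 1 * 0 = xcoef X_rank1 j * 0 - 0 * xcoef Y_rank1 j"
      using rank1_cocycleD(1)[OF cocycle, of j] j by (simp add: X_rank1_def Y_rank1_def)
    show "B j - B 1 * (if j = 1 then 1 else 0) = ycoef X_rank1 j * 0 - 0 * ycoef Y_rank1 j"
      using rank1_cocycleD(2)[OF cocycle, of j] j by (auto simp: X_rank1_def Y_rank1_def)
    show "C j - B 1 * 0 = (zshift Y_rank1 - zshift X_rank1) * 0"
      using rank1_cocycleD(3)[OF cocycle, of j] j by (simp add: X_rank1_def Y_rank1_def)
  qed simp
qed

lemma Ext1_one_Mmod_Mmod:
  fixes la :: "'k::field_char_0"
  assumes la: "la \<notin> \<int>"
  shows "Ext1_one (Mmod la) (Mmod la)"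
  unfolding Mmod_rank1
proof (rule Ext1_one_rank1I[OF rank1_relations_M rank1_relations_M])
  let ?x = "xcoef (M_rank1 la)" and ?y = "ycoef (M_rank1 la)"
  note x_nz = xcoef_M_nonzero[OF la]
  show "rank1_cocycle (M_rank1 la) (M_rank1 la) (\<lambda>_. 0) (\<lambda>j. 2 * (of_int j - 1 - la) / ?x (j-1)) (\<lambda>_. 1)"
    unfolding rank1_cocycle_def using x_nz by (simp add: field_simps)
  show "\<not> rank1_coboundary (M_rank1 la) (M_rank1 la) (\<lambda>_. 0) (\<lambda>j. 2 * (of_int j - 1 - la) / ?x (j-1)) (\<lambda>_. 1)"
    by (rule not_rank1_coboundary_same_zshift[of _ _ 0]) simp_all
  fix A B C :: "int \<Rightarrow> 'k" assume cocycle: "rank1_cocycle (M_rank1 la) (M_rank1 la) A B C"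
  have B: "?y (j+1) * A j + ?x j * B (j+1) = 2 * (of_int j - la) * C j" for j
    using rank1_cocycleD(6)[OF cocycle, of j] by (simp add: algebra_simps)
  have C_step: "C (j+1) = C j" for j
    using rank1_cocycleD(4)[OF cocycle, of j] x_nz[of j] by (simp add: algebra_simps)
  have C_step': "C (j-1) = C j" for j
    using C_step[of "j-1"] by simp
  have C: "C j = C 0" for j
    by (induction j rule: int_induct[where k = 0]) (simp_all add: C_step C_step')
  obtain g where g: "\<forall>j. g (j+1) = g j - A j / ?x j"
    using ex_int_antidifference[of "\<lambda>j. - A j / ?x j"] by (auto simp: algebra_simps)
  show "\<exists>a. rank1_coboundary (M_rank1 la) (M_rank1 la) (\<lambda>j. A j - a * 0)
      (\<lambda>j. B j - a * (2 * (of_int j - 1 - la) / ?x (j-1))) (\<lambda>j. C j - a * 1)"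
    unfolding rank1_coboundary_def
  proof (intro exI[of _ "C 0"] exI[of _ g] conjI allI impI ballI)
    fix j :: int
    show "C j - C 0 * 1 = (zshift (M_rank1 la) - zshift (M_rank1 la)) * g j" using C[of j] by simp
    show "A j - C 0 * 0 = ?x j * g j - g (j+1) * ?x j"
      using g[rule_format, of j] x_nz[of j] by (simp add: field_simps)
    show "B j - C 0 * (2 * (of_int j - 1 - la) / ?x (j-1)) = ?y j * g j - g (j-1) * ?y j"
    proof -
      have gj: "g j = g (j-1) - A (j-1) / ?x (j-1)" using g[rule_format, of "j-1"] by simp
      have Bj: "B j = (2 * (of_int j - 1 - la) * C 0 - ?y j * A (j-1)) / ?x (j-1)"
        using B[of "j-1"] C[of "j-1"] x_nz[of "j-1"] by (simp add: eq_divide_eq algebra_simps)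
      show ?thesis unfolding gj Bj using x_nz[of "j-1"] by (simp add: field_simps)
    qed
  qed simp
qed

lemma gExt1_zero_Mmod:
  fixes la :: "'k::field_char_0"
  assumes la: "la \<notin> \<int>" and S: "S \<in> {Xmod, Ymod}"
  shows "gExt1_zero (Mmod la) S \<and> gExt1_zero S (Mmod la)"
proof -
  have "la + of_int d \<noteq> 0" for d
  proof
    assume "la + of_int d = 0"
    then have "la = of_int (- d)" by (simp add: eq_neg_iff_add_eq_0)
    with la show False by auto
  qed
  moreover have "la \<noteq> of_int d" for d
    using la by auto
  ultimately show ?thesis
    using S unfolding Mmod_rank1 Xmod_rank1 Ymod_rank1
    by (auto intro!: gExt1_zero_rank1I simp: rank1_relations_M rank1_relations_X rank1_relations_Y)
qed

theorem lemma3p7: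
  fixes dummy :: "'k::field_char_0"
  assumes alg_closed: "\<forall>p::'k poly. degree p > 0 \<longrightarrow> (\<exists>t. poly p t = 0)"
  shows "gExt1_k_deg0 (Xmod::'k gmod) Ymod \<and> gExt1_k_deg0 (Ymod::'k gmod) Xmod
       \<and> gExt1_k_deg0 (Xmod::'k gmod) Xmod \<and> gExt1_k_deg0 (Ymod::'k gmod) Ymod
       \<and> (\<forall>la mu::'k. la \<notin> \<int> \<longrightarrow> mu \<notin> \<int> \<longrightarrow> la \<noteq> mu \<longrightarrow> Ext1_zero (Mmod la) (Mmod mu))
       \<and> (\<forall>la::'k. la \<notin> \<int> \<longrightarrow> Ext1_one (Mmod la) (Mmod la))
       \<and> (\<forall>la::'k. la \<notin> \<int> \<longrightarrow> (\<forall>S\<in>{Xmod, Ymod}.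
              gExt1_zero (Mmod la) S \<and> gExt1_zero S (Mmod la)))"
proof -
  have "gExt1_k_deg0 (Xmod::'k gmod) Ymod \<and> gExt1_k_deg0 (Ymod::'k gmod) Xmod
       \<and> gExt1_k_deg0 (Xmod::'k gmod) Xmod \<and> gExt1_k_deg0 (Ymod::'k gmod) Ymod"
    using Ext1_one_Xmod_Ymod Ext1_one_Ymod_Xmod Ext1_one_Xmod_Xmod Ext1_one_Ymod_Ymod
    unfolding Xmod_rank1 Ymod_rank1
    by (intro conjI gExt1_k_deg0_rank1I) (simp_all add: rank1_relations_X rank1_relations_Y)
  moreover have "Ext1_zero (Mmod la) (Mmod mu)" if "la \<noteq> mu" for la mu :: 'k
    unfolding Mmod_rank1 using that by (simp add: Ext1_zero_rank1_zshift_ne rank1_relations_M)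
  ultimately show ?thesis using Ext1_one_Mmod_Mmod gExt1_zero_Mmod by blast
qed

end
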